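(* For every $\mathsf{UCQ}^{\neq}$ $\tilde q$ (a Boolean union of conjunctive queries possibly containing inequality atoms $x\neq y$) and every $k\in\mathbb{N}$, there exists a finite set $\mathcal{Q}^{\neq}$ of $\mathsf{CQ}^{\neq}$ queries, together with rational numbers $\gamma_q$ ($q\in\mathcal{Q}^{\neq}$) computable from $q$ (one may take $\gamma_q=1/|\mathrm{Aut}(q)|$, where $\mathrm{Aut}(q)$ is the set of homomorphisms from $q$ to itself), such that for every database $\mathcal{D}$: $$\#\mathrm{FMS}_{\tilde q}(k,\mathcal{D})=\sum_{q\in\mathcal{Q}^{\neq}}\#\mathrm{Hom}_q(\mathcal{D})\cdot\gamma_q,$$ where $\#\mathrm{Hom}_q(\mathcal{D})$ is the number of homomorphisms from $q$ to $\mathcal{D}$. Moreover, every $q\in\mathcal{Q}^{\neq}$ has size at most quadratic in the size of $\tilde q$.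
   Context: A database is a finite set of facts $P(\vec a)$ over constants. A homomorphism from a $\mathsf{CQ}^{\neq}$ $q$ (a conjunction of relational atoms and inequality atoms over variables and constants, all variables existentially quantified) to $\mathcal{D}$ is a map $h$ from the terms of $q$ to constants, the identity on constants, such that $P(h(\vec x))\in\mathcal{D}$ for every relational atom $P(\vec x)$ of $q$ and $h(x)\neq h(y)$ for every inequality atom $x\neq y$; homomorphisms between queries are defined analogously. $\mathcal{D}\models\tilde q$ if some disjunct of $\tilde q$ has a homomorphism to $\mathcal{D}$. A minimal support of $\tilde q$ in $\mathcal{D}$ is an inclusion-minimal $S\subseteq\mathcal{D}$ with $S\models\tilde q$; $\#\mathrm{FMS}_{\tilde q}(k,\mathcal{D})$ is the number of minimal supports of $\tilde q$ in $\mathcal{D}$ of cardinality exactly $k$. *)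

theory Defs
  imports Complex_Main
begin

datatype ('v, 'c) trm = Var 'v | Const 'c

text \<open>A CQ with inequalities: a list of relational atoms (relation name, argument terms)
  and a list of inequality atoms (s, t) meaning s \<noteq> t. All variables are existentially
  quantified (Boolean query).\<close>
type_synonym ('r, 'v, 'c) cqneq =
  "('r \<times> ('v, 'c) trm list) list \<times> (('v, 'c) trm \<times> ('v, 'c) trm) list"

type_synonym ('r, 'v, 'c) ucqneq = "('r, 'v, 'c) cqneq list"

type_synonym ('r, 'c) database = "('r \<times> 'c list) set"

fun trm_vars :: "('v, 'c) trm \<Rightarrow> 'v set" where
  "trm_vars (Var x) = {x}"
| "trm_vars (Const c) = {}"

definition rel_vars :: "('r, 'v, 'c) cqneq \<Rightarrow> 'v set" where
  "rel_vars q = (\<Union>(P, ts) \<in> set (fst q). \<Union>t \<in> set ts. trm_vars t)"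

definition cq_vars :: "('r, 'v, 'c) cqneq \<Rightarrow> 'v set" where
  "cq_vars q = rel_vars q \<union> (\<Union>(s, t) \<in> set (snd q). trm_vars s \<union> trm_vars t)"

definition safe_cq :: "('r, 'v, 'c) cqneq \<Rightarrow> bool" where
  "safe_cq q \<longleftrightarrow> cq_vars q \<subseteq> rel_vars q"

fun eval_trm :: "('v \<Rightarrow> 'c) \<Rightarrow> ('v, 'c) trm \<Rightarrow> 'c" where
  "eval_trm h (Var x) = h x"
| "eval_trm h (Const c) = c"

definition is_hom :: "('r, 'v, 'c) cqneq \<Rightarrow> ('r, 'c) database \<Rightarrow> ('v \<Rightarrow> 'c) \<Rightarrow> bool" where
  "is_hom q D h \<longleftrightarrow>
     (\<forall>(P, ts) \<in> set (fst q). (P, map (eval_trm h) ts) \<in> D) \<and>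
     (\<forall>(s, t) \<in> set (snd q). eval_trm h s \<noteq> eval_trm h t)"

text \<open>The set of homomorphisms from q to D, as maps on the variables of q
  (identity on constants; canonical value outside the variables of q).\<close>
definition Hom :: "('r, 'v, 'c) cqneq \<Rightarrow> ('r, 'c) database \<Rightarrow> ('v \<Rightarrow> 'c) set" where
  "Hom q D = {h. is_hom q D h \<and> (\<forall>x. x \<notin> cq_vars q \<longrightarrow> h x = undefined)}"

definition count_hom :: "('r, 'v, 'c) cqneq \<Rightarrow> ('r, 'c) database \<Rightarrow> nat" where
  "count_hom q D = card (Hom q D)"

fun subst_trm :: "('v \<Rightarrow> ('w, 'c) trm) \<Rightarrow> ('v, 'c) trm \<Rightarrow> ('w, 'c) trm" where
  "subst_trm g (Var x) = g x"
| "subst_trm g (Const c) = Const c"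

definition is_qhom ::
  "('r, 'v, 'c) cqneq \<Rightarrow> ('r, 'w, 'c) cqneq \<Rightarrow> ('v \<Rightarrow> ('w, 'c) trm) \<Rightarrow> bool" where
  "is_qhom q q' g \<longleftrightarrow>
     (\<forall>(P, ts) \<in> set (fst q). (P, map (subst_trm g) ts) \<in> set (fst q')) \<and>
     (\<forall>(s, t) \<in> set (snd q). subst_trm g s \<noteq> subst_trm g t)"

definition Aut :: "('r, 'v, 'c) cqneq \<Rightarrow> ('v \<Rightarrow> ('v, 'c) trm) set" where
  "Aut q = {g. is_qhom q q g \<and> (\<forall>x. x \<notin> cq_vars q \<longrightarrow> g x = Var x)}"

definition models :: "('r, 'c) database \<Rightarrow> ('r, 'v, 'c) ucqneq \<Rightarrow> bool" where
  "models D u \<longleftrightarrow> (\<exists>q \<in> set u. \<exists>h. is_hom q D h)"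

definition min_support :: "('r, 'v, 'c) ucqneq \<Rightarrow> ('r, 'c) database \<Rightarrow> ('r, 'c) database \<Rightarrow> bool" where
  "min_support u D S \<longleftrightarrow> S \<subseteq> D \<and> models S u \<and> (\<forall>S'. S' \<subset> S \<longrightarrow> \<not> models S' u)"

definition count_FMS :: "('r, 'v, 'c) ucqneq \<Rightarrow> nat \<Rightarrow> ('r, 'c) database \<Rightarrow> nat" where
  "count_FMS u k D = card {S. min_support u D S \<and> card S = k}"

text \<open>Size of queries: total number of symbols (relation atoms with their arguments,
  inequality atoms).\<close>
definition cq_size :: "('r, 'v, 'c) cqneq \<Rightarrow> nat" where
  "cq_size q = (\<Sum>a \<leftarrow> fst q. 1 + length (snd a)) + 3 * length (snd q)"

definition ucq_size :: "('r, 'v, 'c) ucqneq \<Rightarrow> nat" where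
  "ucq_size u = (\<Sum>q \<leftarrow> u. 1 + cq_size q)"

end

theory Submission
  imports Defs "HOL-Library.FuncSet"
begin

(*
  Every minimal support S of size k is the image of the atoms of a disjunct q under a
  homomorphism h. Identifying the variables of q with equal h-values, and replacing those
  whose value is a constant of the UCQ by that constant, presents S as an instance of a
  pattern: a set A of at most |u| atoms over the terms of the UCQ, instantiated by an
  assignment that is injective on the variables of A and avoids the set K of constants of
  the UCQ. Two instances of a pattern differ by a permutation of the constants fixing K,
  and such permutations preserve minimal supports and their size. Hence either all or no
  instances of a pattern are minimal supports of size k, and patterns sharing an instance
  have the same instances; one pattern per class partitions the minimal supports in D.

  For a pattern A let q_A consist of the atoms of A together with x <> y for distinct
  variables and x <> c for variables x and constants c in K. Its homomorphisms into D are
  exactly the assignments above mapping A into D, and those with a given image S form a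
  torsor of Aut(q_A), which permutes the variables and preserves A. So the number of
  instances of A in D is #Hom(q_A, D) / |Aut(q_A)|, and q_A has at most |u| atoms and
  2 |u|^2 inequalities.
*)

definition map_atom :: "('a \<Rightarrow> 'b) \<Rightarrow> 'r \<times> 'a list \<Rightarrow> 'r \<times> 'b list" where
  "map_atom f a = (fst a, map f (snd a))"

definition atoms_over :: "'a set \<Rightarrow> ('r \<times> 'a list) set" where
  "atoms_over T = {a. set (snd a) \<subseteq> T}"

definition atom_terms :: "('r \<times> 'a list) set \<Rightarrow> 'a set" where
  "atom_terms A = (\<Union>a\<in>A. set (snd a))"

definition atom_vars :: "('r \<times> ('v, 'c) trm list) set \<Rightarrow> 'v set" where
  "atom_vars A = {x. Var x \<in> atom_terms A}"

lemma map_atom_map_atom [simp]: "map_atom f (map_atom g a) = map_atom (f \<circ> g) a"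
  by (simp add: map_atom_def)

lemma map_atom_id [simp]: "map_atom id a = a"
  by (simp add: map_atom_def)

lemma image_map_atom_cong:
  "A \<subseteq> atoms_over T \<Longrightarrow> (\<And>t. t \<in> T \<Longrightarrow> f t = g t) \<Longrightarrow> map_atom f ` A = map_atom g ` A"
  by (force simp: map_atom_def atoms_over_def)

lemma inj_on_map_atom: "inj_on f T \<Longrightarrow> inj_on (map_atom f) (atoms_over T)"
proof (rule inj_onI)
  fix a b assume "inj_on f T" "a \<in> atoms_over T" "b \<in> atoms_over T" "map_atom f a = map_atom f b"
  then show "a = b"
    using inj_on_map_eq_map[OF inj_on_subset[of f T "set (snd a) \<union> set (snd b)"]]
    by (auto simp: map_atom_def atoms_over_def prod_eq_iff)
qed

lemma inj_map_atom: "inj f \<Longrightarrow> inj (map_atom f)"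
  using inj_on_map_atom[of f UNIV] by (simp add: atoms_over_def)

lemma atoms_over_mono: "T \<subseteq> T' \<Longrightarrow> atoms_over T \<subseteq> atoms_over T'"
  by (auto simp: atoms_over_def)

lemma subset_atoms_over_iff: "A \<subseteq> atoms_over T \<longleftrightarrow> atom_terms A \<subseteq> T"
  by (auto simp: atoms_over_def atom_terms_def)

lemma atom_terms_map_atom: "atom_terms (map_atom f ` A) = f ` atom_terms A"
  by (auto simp: atom_terms_def map_atom_def)

lemma finite_atom_vars: "finite A \<Longrightarrow> finite (atom_vars A)"
  unfolding atom_vars_def atom_terms_def
  by (rule finite_vimageI[where h = Var, unfolded vimage_def]) (auto simp: inj_def)

lemma atoms_over_atom_vars: "B \<subseteq> atoms_over (Var ` atom_vars B \<union> range Const)"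
proof -
  have "t \<in> Var ` atom_vars B \<union> range Const" if "t \<in> atom_terms B" for t
    using that by (cases t) (auto simp: atom_vars_def)
  then show ?thesis by (auto simp: subset_atoms_over_iff)
qed

lemma atoms_over_vars_consts:
  assumes "A \<subseteq> atoms_over (range Var \<union> Const ` K)"
  shows "A \<subseteq> atoms_over (Var ` atom_vars A \<union> Const ` K)"
proof -
  have "t \<in> Var ` atom_vars A \<union> Const ` K" if "t \<in> atom_terms A" for t
  proof (cases t)
    case (Var x)
    then show ?thesis using that by (simp add: atom_vars_def)
  next
    case (Const c)
    then show ?thesis using that assms by (auto simp: subset_atoms_over_iff)
  qed
  then show ?thesis unfolding subset_atoms_over_iff by blast
qed

lemma mem_trm_vars_iff: "x \<in> trm_vars t \<longleftrightarrow> t = Var x"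
  by (cases t) auto

lemma rel_vars_eq_atom_vars: "rel_vars q = atom_vars (set (fst q))"
  unfolding rel_vars_def atom_vars_def atom_terms_def by (auto simp: case_prod_beta mem_trm_vars_iff) force

lemma is_hom_iff_map_atom:
  "is_hom q D h \<longleftrightarrow> map_atom (eval_trm h) ` set (fst q) \<subseteq> D \<and>
     (\<forall>p\<in>set (snd q). eval_trm h (fst p) \<noteq> eval_trm h (snd p))"
  unfolding is_hom_def image_subset_iff by (simp add: map_atom_def case_prod_beta)

lemma is_qhom_iff_map_atom:
  "is_qhom q q' g \<longleftrightarrow> map_atom (subst_trm g) ` set (fst q) \<subseteq> set (fst q') \<and>
     (\<forall>p\<in>set (snd q). subst_trm g (fst p) \<noteq> subst_trm g (snd p))"
  unfolding is_qhom_def image_subset_iff by (simp add: map_atom_def case_prod_beta)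

section \<open>Instances of a set of atoms\<close>

definition fresh_inj :: "'c set \<Rightarrow> 'v set \<Rightarrow> ('v \<Rightarrow> 'c) \<Rightarrow> bool" where
  "fresh_inj K V h \<longleftrightarrow> inj_on h V \<and> h ` V \<inter> K = {}"

lemma inj_on_eval_trm:
  assumes "fresh_inj K V h"
  shows "inj_on (eval_trm h) (Var ` V \<union> Const ` K)"
proof (rule inj_onI)
  fix s t assume "s \<in> Var ` V \<union> Const ` K" "t \<in> Var ` V \<union> Const ` K" "eval_trm h s = eval_trm h t"
  moreover have "inj_on h V" and "\<forall>x\<in>V. h x \<notin> K" using assms by (auto simp: fresh_inj_def)
  ultimately show "s = t" by (auto dest: inj_onD)
qed

lemma fresh_inj_comp:
  assumes "inj \<sigma>" "\<forall>c\<in>K. \<sigma> c = c" "fresh_inj K V h"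
  shows "fresh_inj K V (\<sigma> \<circ> h)"
proof -
  have "\<sigma> (h x) \<notin> K" if "x \<in> V" for x
  proof
    assume \<sigma>hx: "\<sigma> (h x) \<in> K"
    have "\<sigma> (\<sigma> (h x)) = \<sigma> (h x)" by (rule bspec[OF assms(2) \<sigma>hx])
    then have "\<sigma> (h x) = h x" by (rule injD[OF assms(1)])
    then have "h x \<in> K" using \<sigma>hx by simp
    then show False using that assms(3) by (auto simp: fresh_inj_def)
  qed
  moreover have "inj_on (\<sigma> \<circ> h) V"
    using assms(3) inj_on_subset[OF assms(1) subset_UNIV] by (auto simp: fresh_inj_def intro: comp_inj_on)
  ultimately show ?thesis unfolding fresh_inj_def by auto
qed

lemma fresh_inj_subset: "fresh_inj K V h \<Longrightarrow> W \<subseteq> V \<Longrightarrow> fresh_inj K W h"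
  by (auto simp: fresh_inj_def intro: inj_on_subset)

lemma fresh_inj_representatives:
  assumes "\<And>x. x \<in> V \<Longrightarrow> h (r (h x)) = h x"
  shows "fresh_inj K (r ` h ` {x \<in> V. h x \<notin> K}) h"
  unfolding fresh_inj_def
proof
  show "inj_on h (r ` h ` {x \<in> V. h x \<notin> K})"
  proof (rule inj_onI)
    fix y1 y2 assume "y1 \<in> r ` h ` {x \<in> V. h x \<notin> K}" "y2 \<in> r ` h ` {x \<in> V. h x \<notin> K}"
      and eq: "h y1 = h y2"
    then obtain x1 x2 where x: "x1 \<in> V" "y1 = r (h x1)" "x2 \<in> V" "y2 = r (h x2)" by blast
    then have "h x1 = h x2" using eq assms by simp
    then show "y1 = y2" using x by simp
  qed
  show "h ` r ` h ` {x \<in> V. h x \<notin> K} \<inter> K = {}"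
    using assms by auto
qed

definition instances :: "'c set \<Rightarrow> ('r \<times> ('v, 'c) trm list) set \<Rightarrow> ('r, 'c) database set" where
  "instances K A = {map_atom (eval_trm h) ` A | h. fresh_inj K (atom_vars A) h}"

lemma fresh_inj_extend_bij:
  assumes "finite V" "fresh_inj K V h" "fresh_inj K V h'"
  obtains \<sigma> where "bij \<sigma>" "\<And>x. x \<in> V \<Longrightarrow> \<sigma> (h x) = h' x" "\<And>c. c \<in> K \<Longrightarrow> \<sigma> c = c"
proof -
  define A where "A = h ` V"
  define B where "B = h' ` V"
  have inj: "inj_on h V" "inj_on h' V" using assms(2,3) by (auto simp: fresh_inj_def)
  have f: "bij_betw (h' \<circ> inv_into V h) A B"
    unfolding A_def B_def
    by (rule bij_betw_trans[OF bij_betw_inv_into]) (use inj in \<open>auto simp: bij_betw_def\<close>)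
  have "card (B - A) = card (A - B)"
    using assms(1) inj by (simp add: A_def B_def card_Diff_subset_Int Int_commute card_image)
  then obtain e where e: "bij_betw e (B - A) (A - B)"
    using finite_same_card_bij[of "B - A" "A - B"] assms(1) by (auto simp: A_def B_def)
  \<comment> \<open>Map A onto B by h' after h inverse and B - A back onto A - B; K lies outside A and B.\<close>
  define \<sigma> where "\<sigma> x = (if x \<in> A then (h' \<circ> inv_into V h) x else if x \<in> B then e x else x)" for x
  have "bij_betw \<sigma> A B" using f by (rule bij_betw_cong[THEN iffD1, rotated]) (simp add: \<sigma>_def)
  moreover have "bij_betw \<sigma> (B - A) (A - B)"
    using e by (rule bij_betw_cong[THEN iffD1, rotated]) (simp add: \<sigma>_def)
  moreover have "bij_betw \<sigma> (- (A \<union> B)) (- (A \<union> B))"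
    using bij_betw_id by (rule bij_betw_cong[THEN iffD1, rotated]) (simp add: \<sigma>_def)
  ultimately have "bij_betw \<sigma> (A \<union> (B - A) \<union> - (A \<union> B)) (B \<union> (A - B) \<union> - (A \<union> B))"
    by (intro bij_betw_combine) auto
  moreover have "A \<union> (B - A) \<union> - (A \<union> B) = UNIV" "B \<union> (A - B) \<union> - (A \<union> B) = UNIV" by auto
  ultimately have "bij \<sigma>" by simp
  moreover have "\<sigma> (h x) = h' x" if "x \<in> V" for x
    using that inj by (simp add: \<sigma>_def A_def)
  moreover have "\<sigma> c = c" if "c \<in> K" for c
    using that assms(2,3) by (auto simp: \<sigma>_def A_def B_def fresh_inj_def)
  ultimately show thesis by (rule that)
qed

lemma instances_related_by_bij:
  assumes "finite A" "A \<subseteq> atoms_over (range Var \<union> Const ` K)"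
    and "S \<in> instances K A" "T \<in> instances K A"
  obtains \<sigma> where "bij \<sigma>" "\<forall>c\<in>K. \<sigma> c = c" "T = map_atom \<sigma> ` S"
proof -
  obtain h h' where h: "fresh_inj K (atom_vars A) h" "S = map_atom (eval_trm h) ` A"
    and h': "fresh_inj K (atom_vars A) h'" "T = map_atom (eval_trm h') ` A"
    using assms(3,4) by (auto simp: instances_def)
  obtain \<sigma> where \<sigma>: "bij \<sigma>" "\<And>x. x \<in> atom_vars A \<Longrightarrow> \<sigma> (h x) = h' x" "\<And>c. c \<in> K \<Longrightarrow> \<sigma> c = c"
    using fresh_inj_extend_bij[OF finite_atom_vars[OF assms(1)] h(1) h'(1)] by blast
  have "map_atom \<sigma> ` S = map_atom (\<sigma> \<circ> eval_trm h) ` A"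
    by (simp add: h(2) image_image)
  also have "\<dots> = T"
    unfolding h'(2) by (rule image_map_atom_cong[OF atoms_over_vars_consts[OF assms(2)]]) (auto simp: \<sigma>)
  finally show thesis using that \<sigma>(1,3) by blast
qed

lemma map_atom_image_in_instances:
  assumes "inj \<sigma>" "\<forall>c\<in>K. \<sigma> c = c" "A \<subseteq> atoms_over (range Var \<union> Const ` K)" "S \<in> instances K A"
  shows "map_atom \<sigma> ` S \<in> instances K A"
proof -
  obtain h where h: "fresh_inj K (atom_vars A) h" "S = map_atom (eval_trm h) ` A"
    using assms(4) by (auto simp: instances_def)
  have "map_atom \<sigma> ` S = map_atom (\<sigma> \<circ> eval_trm h) ` A"
    by (simp add: h(2) image_image)
  also have "\<dots> = map_atom (eval_trm (\<sigma> \<circ> h)) ` A"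
    by (rule image_map_atom_cong[OF assms(3)]) (auto simp: assms(2))
  finally show ?thesis
    using fresh_inj_comp[OF assms(1,2) h(1)] by (auto simp: instances_def)
qed

lemma instances_eq_if_common_instance:
  assumes "finite A" "A \<subseteq> atoms_over (range Var \<union> Const ` K)"
    and "finite B" "B \<subseteq> atoms_over (range Var \<union> Const ` K)"
    and "S \<in> instances K A" "S \<in> instances K B"
  shows "instances K A = instances K B"
proof -
  have "instances K A \<subseteq> instances K B"
    if hyps: "finite A" "A \<subseteq> atoms_over (range Var \<union> Const ` K)" "B \<subseteq> atoms_over (range Var \<union> Const ` K)"
      "S \<in> instances K A" "S \<in> instances K B" for A B
  proof
    fix T assume "T \<in> instances K A"
    then obtain \<sigma> where "bij \<sigma>" "\<forall>c\<in>K. \<sigma> c = c" "T = map_atom \<sigma> ` S"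
      by (rule instances_related_by_bij[OF hyps(1,2,4)])
    then show "T \<in> instances K B"
      using map_atom_image_in_instances[OF bij_is_inj _ hyps(3,5)] by simp
  qed
  from this[OF assms(1,2,4,5,6)] this[OF assms(3,4,2,6,5)] show ?thesis by (rule subset_antisym)
qed

section \<open>Terms and constants of a UCQ\<close>

definition cq_term_list :: "('r, 'v, 'c) cqneq \<Rightarrow> ('v, 'c) trm list" where
  "cq_term_list q = concat (map snd (fst q)) @ concat (map (\<lambda>p. [fst p, snd p]) (snd q))"

lemma atoms_over_cq_term_list: "set (fst q) \<subseteq> atoms_over (set (cq_term_list q))"
  unfolding atoms_over_def cq_term_list_def by auto

lemma ineq_terms_in_cq_term_list:
  "p \<in> set (snd q) \<Longrightarrow> fst p \<in> set (cq_term_list q) \<and> snd p \<in> set (cq_term_list q)"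
  unfolding cq_term_list_def by auto

lemma length_cq_term_list: "length (cq_term_list q) \<le> cq_size q"
proof -
  have "length (cq_term_list q) = (\<Sum>a\<leftarrow>fst q. length (snd a)) + 2 * length (snd q)"
    by (simp add: cq_term_list_def length_concat comp_def sum_list_triv)
  also have "\<dots> \<le> cq_size q"
    unfolding cq_size_def by (intro add_mono sum_list_mono) auto
  finally show ?thesis .
qed

definition ucq_terms :: "('r, 'v, 'c) ucqneq \<Rightarrow> ('v, 'c) trm set" where
  "ucq_terms u = set (concat (map cq_term_list u))"

definition ucq_consts :: "('r, 'v, 'c) ucqneq \<Rightarrow> 'c set" where
  "ucq_consts u = {c. Const c \<in> ucq_terms u}"

lemma cq_size_le_ucq_size: "q \<in> set u \<Longrightarrow> cq_size q \<le> ucq_size u"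
  unfolding ucq_size_def using member_le_sum_list[of "1 + cq_size q" "map (\<lambda>q. 1 + cq_size q) u"] by simp

lemma card_ucq_terms_le: "card (ucq_terms u) \<le> ucq_size u"
proof -
  have "card (ucq_terms u) \<le> (\<Sum>q\<leftarrow>u. length (cq_term_list q))"
    unfolding ucq_terms_def using card_length[of "concat (map cq_term_list u)"]
    by (simp add: length_concat comp_def)
  also have "\<dots> \<le> ucq_size u"
    unfolding ucq_size_def by (intro sum_list_mono) (simp add: length_cq_term_list le_SucI)
  finally show ?thesis .
qed

lemma finite_ucq_consts: "finite (ucq_consts u)"
  unfolding ucq_consts_def ucq_terms_def
  by (rule finite_vimageI[where h = Const, unfolded vimage_def]) (auto simp: inj_def)

lemma card_ucq_consts_le:
  fixes u :: "('r, 'v, 'c) ucqneq"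
  shows "card (ucq_consts u) \<le> ucq_size u"
proof -
  have "card (ucq_consts u) = card (Const ` ucq_consts u :: ('v, 'c) trm set)"
    by (rule card_image[symmetric]) (simp add: inj_on_def)
  also have "\<dots> \<le> card (ucq_terms u)"
    by (rule card_mono) (auto simp: ucq_terms_def ucq_consts_def)
  finally show ?thesis using card_ucq_terms_le le_trans by blast
qed

lemma atom_terms_subset_ucq_terms: "q \<in> set u \<Longrightarrow> atom_terms (set (fst q)) \<subseteq> ucq_terms u"
  by (auto simp: atom_terms_def ucq_terms_def cq_term_list_def)

definition ucq_rels :: "('r, 'v, 'c) ucqneq \<Rightarrow> 'r set" where
  "ucq_rels u = (\<Union>q\<in>set u. fst ` set (fst q))"

\<comment> \<open>Every atom of u respects the length bound, which only serves to make this set finite.\<close>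
definition candidate_atoms :: "('r, 'v, 'c) ucqneq \<Rightarrow> ('r \<times> ('v, 'c) trm list) set" where
  "candidate_atoms u = {a \<in> atoms_over (ucq_terms u). fst a \<in> ucq_rels u \<and> length (snd a) \<le> ucq_size u}"

lemma finite_candidate_atoms: "finite (candidate_atoms u)"
proof (rule finite_subset)
  show "candidate_atoms u \<subseteq> ucq_rels u \<times> {ts. set ts \<subseteq> ucq_terms u \<and> length ts \<le> ucq_size u}"
    by (auto simp: candidate_atoms_def atoms_over_def)
  show "finite (ucq_rels u \<times> {ts. set ts \<subseteq> ucq_terms u \<and> length ts \<le> ucq_size u})"
    by (intro finite_cartesian_product finite_lists_length_le) (auto simp: ucq_rels_def ucq_terms_def)
qed

lemma candidate_atoms_subset_atoms_over: "candidate_atoms u \<subseteq> atoms_over (range Var \<union> Const ` ucq_consts u)"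
proof -
  have "ucq_terms u \<subseteq> range Var \<union> Const ` ucq_consts u"
  proof
    fix t assume "t \<in> ucq_terms u"
    then show "t \<in> range Var \<union> Const ` ucq_consts u" by (cases t) (auto simp: ucq_consts_def)
  qed
  then show ?thesis
    unfolding candidate_atoms_def using atoms_over_mono by blast
qed

section \<open>Minimal models and patterns\<close>

definition minimal_model :: "('r, 'v, 'c) ucqneq \<Rightarrow> ('r, 'c) database \<Rightarrow> bool" where
  "minimal_model u S \<longleftrightarrow> models S u \<and> (\<forall>S'. S' \<subset> S \<longrightarrow> \<not> models S' u)"

lemma models_map_atom:
  assumes "inj \<sigma>" "\<forall>c\<in>ucq_consts u. \<sigma> c = c" "models S u"
  shows "models (map_atom \<sigma> ` S) u"
proof -
  obtain q h where q: "q \<in> set u" "is_hom q S h" using assms(3) by (auto simp: models_def)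
  have eval: "eval_trm (\<sigma> \<circ> h) t = \<sigma> (eval_trm h t)" if "t \<in> set (cq_term_list q)" for t
  proof (cases t)
    case (Const c)
    then have "c \<in> ucq_consts u" using that q(1) by (auto simp: ucq_consts_def ucq_terms_def)
    then show ?thesis using assms(2) Const by simp
  qed simp
  have "map_atom (eval_trm (\<sigma> \<circ> h)) ` set (fst q) = map_atom (\<sigma> \<circ> eval_trm h) ` set (fst q)"
    by (rule image_map_atom_cong[OF atoms_over_cq_term_list]) (simp add: eval)
  also have "\<dots> = map_atom \<sigma> ` map_atom (eval_trm h) ` set (fst q)"
    by (simp add: image_image)
  also have "\<dots> \<subseteq> map_atom \<sigma> ` S"
    using q(2) by (intro image_mono) (simp add: is_hom_iff_map_atom)
  finally have atoms: "map_atom (eval_trm (\<sigma> \<circ> h)) ` set (fst q) \<subseteq> map_atom \<sigma> ` S" .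
  have "eval_trm (\<sigma> \<circ> h) (fst p) \<noteq> eval_trm (\<sigma> \<circ> h) (snd p)" if p: "p \<in> set (snd q)" for p
  proof -
    have "eval_trm h (fst p) \<noteq> eval_trm h (snd p)" using q(2) p by (simp add: is_hom_iff_map_atom)
    then show ?thesis using ineq_terms_in_cq_term_list[OF p] by (simp add: eval inj_eq[OF assms(1)])
  qed
  then have "is_hom q (map_atom \<sigma> ` S) (\<sigma> \<circ> h)"
    using atoms by (simp add: is_hom_iff_map_atom)
  then show ?thesis using q(1) by (auto simp: models_def)
qed

lemma minimal_model_map_atom:
  assumes "bij \<sigma>" "\<forall>c\<in>ucq_consts u. \<sigma> c = c" "minimal_model u S"
  shows "minimal_model u (map_atom \<sigma> ` S)"
proof -
  have inj_inv: "inj (inv \<sigma>)"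
    by (rule bij_is_inj[OF bij_imp_bij_inv[OF assms(1)]])
  have inv_fixes: "\<forall>c\<in>ucq_consts u. inv \<sigma> c = c"
  proof
    fix c assume "c \<in> ucq_consts u"
    moreover have "inv \<sigma> (\<sigma> c) = c" by (rule inv_f_f[OF bij_is_inj[OF assms(1)]])
    ultimately show "inv \<sigma> c = c" using assms(2) by simp
  qed
  have inv_image: "map_atom (inv \<sigma>) ` map_atom \<sigma> ` S = S"
    by (simp add: image_image inv_o_cancel[OF bij_is_inj[OF assms(1)]])
  have "\<not> models S' u" if "S' \<subset> map_atom \<sigma> ` S" for S'
  proof
    assume "models S' u"
    then have "models (map_atom (inv \<sigma>) ` S') u"
      by (rule models_map_atom[OF inj_inv inv_fixes])
    moreover have "map_atom (inv \<sigma>) ` S' \<subset> S"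
      using image_strict_mono[OF inj_on_subset[OF inj_map_atom[OF inj_inv]] that] by (simp add: inv_image)
    ultimately show False using assms(3) by (auto simp: minimal_model_def)
  qed
  then show ?thesis
    using models_map_atom[OF bij_is_inj[OF assms(1)] assms(2)] assms(3) by (auto simp: minimal_model_def)
qed

lemma instances_minimal_model:
  assumes "finite A" "A \<subseteq> atoms_over (range Var \<union> Const ` ucq_consts u)"
    and "S \<in> instances (ucq_consts u) A" "T \<in> instances (ucq_consts u) A" "minimal_model u S"
  shows "minimal_model u T \<and> card T = card S"
proof -
  obtain \<sigma> where \<sigma>: "bij \<sigma>" "\<forall>c\<in>ucq_consts u. \<sigma> c = c" "T = map_atom \<sigma> ` S"
    by (rule instances_related_by_bij[OF assms(1-4)])
  have "card (map_atom \<sigma> ` S) = card S"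
    using inj_on_subset[OF inj_map_atom[OF bij_is_inj[OF \<sigma>(1)]] subset_UNIV] by (rule card_image)
  then show ?thesis
    using minimal_model_map_atom[OF \<sigma>(1,2) assms(5)] by (simp add: \<sigma>(3))
qed

lemma minimal_model_eq_image:
  assumes "minimal_model u S"
  obtains q h where "q \<in> set u" "S = map_atom (eval_trm h) ` set (fst q)"
proof -
  obtain q h where q: "q \<in> set u" "is_hom q S h"
    using assms by (auto simp: minimal_model_def models_def)
  let ?S0 = "map_atom (eval_trm h) ` set (fst q)"
  have "is_hom q ?S0 h"
    using q(2) by (simp add: is_hom_iff_map_atom)
  then have "models ?S0 u"
    using q(1) by (auto simp: models_def)
  moreover have "?S0 \<subseteq> S"
    using q(2) by (simp add: is_hom_iff_map_atom)
  ultimately have "S = ?S0"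
    using assms by (auto simp: minimal_model_def)
  with q(1) show thesis by (rule that)
qed

lemma image_in_instances_of_collapse:
  fixes h :: "'v \<Rightarrow> 'c" and B :: "('r \<times> ('v, 'c) trm list) set"
  obtains g where "\<forall>x\<in>atom_vars B. g x \<in> Var ` atom_vars B \<union> Const ` K"
    and "map_atom (eval_trm h) ` B \<in> instances K (map_atom (subst_trm g) ` B)"
proof -
  let ?V = "atom_vars B"
  \<comment> \<open>r picks one variable per h-value; variables with value in K become that constant.\<close>
  define r where "r e = (SOME x. x \<in> ?V \<and> h x = e)" for e
  have r: "r (h x) \<in> ?V \<and> h (r (h x)) = h x" if "x \<in> ?V" for x
    unfolding r_def by (rule someI[of _ x]) (simp add: that)
  define g :: "'v \<Rightarrow> ('v, 'c) trm" where "g x = (if h x \<in> K then Const (h x) else Var (r (h x)))" for x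
  have g_range: "\<forall>x\<in>?V. g x \<in> Var ` ?V \<union> Const ` K"
    using r by (auto simp: g_def)
  have "map_atom (eval_trm h) ` B = map_atom (eval_trm h \<circ> subst_trm g) ` B"
    by (rule image_map_atom_cong[OF atoms_over_atom_vars]) (auto simp: g_def r)
  then have image: "map_atom (eval_trm h) ` B = map_atom (eval_trm h) ` map_atom (subst_trm g) ` B"
    unfolding image_image map_atom_map_atom .
  have vars: "atom_vars (map_atom (subst_trm g) ` B) \<subseteq> r ` h ` {x \<in> ?V. h x \<notin> K}"
  proof
    fix y assume "y \<in> atom_vars (map_atom (subst_trm g) ` B)"
    then obtain t where t: "t \<in> atom_terms B" "Var y = subst_trm g t"
      by (auto simp: atom_vars_def atom_terms_map_atom)
    then obtain x where "t = Var x" "x \<in> ?V" by (cases t) (auto simp: atom_vars_def)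
    then show "y \<in> r ` h ` {x \<in> ?V. h x \<notin> K}"
      using t(2) by (auto simp: g_def split: if_splits)
  qed
  have "fresh_inj K (r ` h ` {x \<in> ?V. h x \<notin> K}) h"
    by (rule fresh_inj_representatives) (simp add: r)
  then have "fresh_inj K (atom_vars (map_atom (subst_trm g) ` B)) h"
    using vars by (rule fresh_inj_subset)
  then show thesis
    using g_range image by (intro that) (auto simp: instances_def)
qed

lemma collapse_subset_candidate_atoms:
  assumes q: "q \<in> set u"
    and g: "\<forall>x\<in>atom_vars (set (fst q)). g x \<in> Var ` atom_vars (set (fst q)) \<union> Const ` ucq_consts u"
  shows "map_atom (subst_trm g) ` set (fst q) \<subseteq> candidate_atoms u"
proof
  fix b assume "b \<in> map_atom (subst_trm g) ` set (fst q)"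
  then obtain a where a: "a \<in> set (fst q)" "b = map_atom (subst_trm g) a" by blast
  have terms: "atom_terms (set (fst q)) \<subseteq> ucq_terms u"
    by (rule atom_terms_subset_ucq_terms[OF q])
  have "subst_trm g t \<in> ucq_terms u" if "t \<in> set (snd a)" for t
  proof (cases t)
    case (Var x)
    then have "x \<in> atom_vars (set (fst q))"
      using a(1) that by (auto simp: atom_vars_def atom_terms_def)
    then have "g x \<in> Var ` atom_vars (set (fst q)) \<union> Const ` ucq_consts u"
      using g by blast
    moreover have "Var ` atom_vars (set (fst q)) \<union> Const ` ucq_consts u \<subseteq> ucq_terms u"
      using terms by (auto simp: atom_vars_def ucq_consts_def)
    ultimately show ?thesis
      using Var by auto
  next
    case (Const c)
    then show ?thesis
      using a(1) that terms by (auto simp: atom_terms_def)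
  qed
  moreover have "fst a \<in> ucq_rels u"
    using a(1) q by (auto simp: ucq_rels_def)
  moreover have "length (snd a) \<le> ucq_size u"
  proof -
    have "length (snd a) \<le> (\<Sum>a\<leftarrow>fst q. 1 + length (snd a))"
      using member_le_sum_list[of "1 + length (snd a)" "map (\<lambda>a. 1 + length (snd a)) (fst q)"] a(1) by simp
    also have "\<dots> \<le> cq_size q" by (simp add: cq_size_def)
    finally show ?thesis using cq_size_le_ucq_size[OF q] by linarith
  qed
  ultimately show "b \<in> candidate_atoms u"
    by (auto simp: a(2) candidate_atoms_def atoms_over_def map_atom_def)
qed

definition patterns :: "('r, 'v, 'c) ucqneq \<Rightarrow> nat \<Rightarrow> ('r \<times> ('v, 'c) trm list) set set" where
  "patterns u k = {A. A \<subseteq> candidate_atoms u \<and> card A \<le> ucq_size u \<and>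
     (\<exists>S\<in>instances (ucq_consts u) A. minimal_model u S \<and> card S = k)}"

lemma finite_patterns: "finite (patterns u k)"
  by (rule finite_subset[of _ "Pow (candidate_atoms u)"]) (auto simp: patterns_def finite_candidate_atoms)

lemma finite_pattern: "A \<in> patterns u k \<Longrightarrow> finite A"
  by (auto simp: patterns_def intro: finite_subset[OF _ finite_candidate_atoms])

lemma pattern_subset_atoms_over: "A \<in> patterns u k \<Longrightarrow> A \<subseteq> atoms_over (range Var \<union> Const ` ucq_consts u)"
  using candidate_atoms_subset_atoms_over by (auto simp: patterns_def)

lemma minimal_model_in_pattern_instances:
  assumes "minimal_model u S" "card S = k"
  obtains A where "A \<in> patterns u k" "S \<in> instances (ucq_consts u) A"
proof -
  obtain q h where q: "q \<in> set u" and S: "S = map_atom (eval_trm h) ` set (fst q)"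
    using minimal_model_eq_image[OF assms(1)] by blast
  obtain g where g: "\<forall>x\<in>atom_vars (set (fst q)). g x \<in> Var ` atom_vars (set (fst q)) \<union> Const ` ucq_consts u"
    and inst: "S \<in> instances (ucq_consts u) (map_atom (subst_trm g) ` set (fst q))"
    unfolding S by (rule image_in_instances_of_collapse)
  have "card (map_atom (subst_trm g) ` set (fst q)) \<le> length (fst q)"
    using card_image_le[of "set (fst q)" "map_atom (subst_trm g)"] card_length[of "fst q"] by simp
  also have "\<dots> \<le> cq_size q"
    unfolding cq_size_def using sum_list_mono[of "fst q" "\<lambda>_. 1" "\<lambda>a. 1 + length (snd a)"]
    by (simp add: sum_list_triv)
  also have "\<dots> \<le> ucq_size u"
    by (rule cq_size_le_ucq_size[OF q])
  finally have "map_atom (subst_trm g) ` set (fst q) \<in> patterns u k"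
    using collapse_subset_candidate_atoms[OF q g] inst assms by (auto simp: patterns_def)
  then show thesis using inst by (rule that)
qed

section \<open>The query of a pattern and its automorphisms\<close>

definition list_of :: "'a set \<Rightarrow> 'a list" where
  "list_of A = (SOME xs. set xs = A \<and> distinct xs)"

lemma set_list_of: "finite A \<Longrightarrow> set (list_of A) = A"
  and distinct_list_of: "finite A \<Longrightarrow> distinct (list_of A)"
  using someI_ex[OF finite_distinct_list] by (auto simp: list_of_def)

definition pattern_ineqs :: "'c set \<Rightarrow> 'v set \<Rightarrow> (('v, 'c) trm \<times> ('v, 'c) trm) list" where
  "pattern_ineqs K V =
     map (\<lambda>p. (Var (fst p), Var (snd p))) (filter (\<lambda>p. fst p \<noteq> snd p) (List.product (list_of V) (list_of V))) @
     map (\<lambda>p. (Var (fst p), Const (snd p))) (List.product (list_of V) (list_of K))"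

definition pattern_query :: "'c set \<Rightarrow> ('r \<times> ('v, 'c) trm list) set \<Rightarrow> ('r, 'v, 'c) cqneq" where
  "pattern_query K A = (list_of A, pattern_ineqs K (atom_vars A))"

lemma set_pattern_ineqs:
  assumes "finite V" "finite K"
  shows "set (pattern_ineqs K V) =
    {(Var x, Var y) | x y. x \<in> V \<and> y \<in> V \<and> x \<noteq> y} \<union> {(Var x, Const c) | x c. x \<in> V \<and> c \<in> K}"
  using assms by (auto simp: pattern_ineqs_def set_list_of image_iff)

lemma pattern_ineqs_hold_iff:
  assumes "finite V" "finite K"
  shows "(\<forall>p\<in>set (pattern_ineqs K V). f (fst p) \<noteq> f (snd p)) \<longleftrightarrow>
    inj_on (f \<circ> Var) V \<and> (\<forall>x\<in>V. \<forall>c\<in>K. f (Var x) \<noteq> f (Const c))"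
proof -
  have "(\<forall>p\<in>set (pattern_ineqs K V). f (fst p) \<noteq> f (snd p)) \<longleftrightarrow>
    (\<forall>x\<in>V. \<forall>y\<in>V. x \<noteq> y \<longrightarrow> f (Var x) \<noteq> f (Var y)) \<and> (\<forall>x\<in>V. \<forall>c\<in>K. f (Var x) \<noteq> f (Const c))"
    unfolding set_pattern_ineqs[OF assms] by (simp add: ball_Un) blast
  then show ?thesis unfolding inj_on_def comp_def by blast
qed

lemma length_pattern_ineqs:
  assumes "finite V" "finite K"
  shows "length (pattern_ineqs K V) \<le> card V * card V + card V * card K"
proof -
  have "length (list_of V) = card V" "length (list_of K) = card K"
    using distinct_card[OF distinct_list_of[OF assms(1)]] distinct_card[OF distinct_list_of[OF assms(2)]]
    by (simp_all add: set_list_of assms)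
  then show ?thesis
    using length_filter_le[of "\<lambda>p. fst p \<noteq> snd p" "List.product (list_of V) (list_of V)"]
    by (simp add: pattern_ineqs_def)
qed

lemma cq_size_pattern_query:
  fixes u :: "('r, 'v, 'c) ucqneq"
  assumes A: "A \<subseteq> candidate_atoms u" "card A \<le> ucq_size u"
  shows "cq_size (pattern_query (ucq_consts u) A) \<le> 8 * (ucq_size u)\<^sup>2"
proof -
  let ?s = "ucq_size u" and ?K = "ucq_consts u" and ?V = "atom_vars A"
  have finite_A: "finite A"
    using A(1) finite_candidate_atoms by (rule finite_subset)
  have "card ?V = card (Var ` ?V :: ('v, 'c) trm set)"
    by (rule card_image[symmetric]) (simp add: inj_on_def)
  also have "\<dots> \<le> card (ucq_terms u)"
  proof (rule card_mono)
    have "A \<subseteq> atoms_over (ucq_terms u)"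
      using A(1) by (auto simp: candidate_atoms_def)
    then show "Var ` ?V \<subseteq> ucq_terms u"
      by (auto simp: subset_atoms_over_iff atom_vars_def)
  qed (simp add: ucq_terms_def)
  finally have card_V: "card ?V \<le> ?s"
    using card_ucq_terms_le le_trans by blast
  have "(\<Sum>a\<leftarrow>list_of A. 1 + length (snd a)) = (\<Sum>a\<in>A. 1 + length (snd a))"
    by (simp add: sum_list_distinct_conv_sum_set distinct_list_of[OF finite_A] set_list_of[OF finite_A])
  also have "\<dots> \<le> card A * (1 + ?s)"
    using A(1) sum_bounded_above[of A "\<lambda>a. 1 + length (snd a)" "1 + ?s"] by (force simp: candidate_atoms_def)
  finally have atoms: "(\<Sum>a\<leftarrow>list_of A. 1 + length (snd a)) \<le> ?s * (1 + ?s)"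
    using A(2) mult_le_mono1 le_trans by blast
  have "length (pattern_ineqs ?K ?V) \<le> card ?V * card ?V + card ?V * card ?K"
    by (rule length_pattern_ineqs[OF finite_atom_vars[OF finite_A] finite_ucq_consts])
  also have "\<dots> \<le> ?s * ?s + ?s * ?s"
    using card_V card_ucq_consts_le by (intro add_mono mult_le_mono) auto
  finally have ineqs: "length (pattern_ineqs ?K ?V) \<le> 2 * ?s\<^sup>2"
    by (simp add: power2_eq_square)
  have "?s * (1 + ?s) \<le> 2 * ?s\<^sup>2"
    by (simp add: power2_eq_square algebra_simps le_square)
  then show ?thesis
    using atoms ineqs by (simp add: cq_size_def pattern_query_def)
qed

context
  fixes K :: "'c set" and A :: "('r \<times> ('v, 'c) trm list) set"
  assumes finite_A: "finite A" and finite_K: "finite K"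
begin

lemma cq_vars_pattern_query: "cq_vars (pattern_query K A) = atom_vars A"
proof -
  have "rel_vars (pattern_query K A) = atom_vars A"
    by (simp add: rel_vars_eq_atom_vars pattern_query_def set_list_of[OF finite_A])
  moreover have "(\<Union>(s, t)\<in>set (snd (pattern_query K A)). trm_vars s \<union> trm_vars t) \<subseteq> atom_vars A"
    using set_pattern_ineqs[OF finite_atom_vars[OF finite_A] finite_K] by (auto simp: pattern_query_def)
  ultimately show ?thesis unfolding cq_vars_def by blast
qed

lemma safe_pattern_query: "safe_cq (pattern_query K A)"
  unfolding safe_cq_def cq_vars_pattern_query
  by (simp add: rel_vars_eq_atom_vars pattern_query_def set_list_of[OF finite_A])

lemma is_hom_pattern_query_iff:
  "is_hom (pattern_query K A) D h \<longleftrightarrow> map_atom (eval_trm h) ` A \<subseteq> D \<and> fresh_inj K (atom_vars A) h"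
proof -
  have "eval_trm h \<circ> Var = h" by (rule ext) simp
  then show ?thesis
    unfolding is_hom_iff_map_atom pattern_query_def fst_conv snd_conv set_list_of[OF finite_A]
      pattern_ineqs_hold_iff[OF finite_atom_vars[OF finite_A] finite_K] fresh_inj_def
    by auto
qed

lemma Hom_pattern_query:
  "Hom (pattern_query K A) D =
    {h. map_atom (eval_trm h) ` A \<subseteq> D \<and> fresh_inj K (atom_vars A) h \<and> h \<in> extensional (atom_vars A)}"
  by (auto simp: Hom_def is_hom_pattern_query_iff cq_vars_pattern_query extensional_def)

lemma Aut_pattern_query:
  "Aut (pattern_query K A) =
    {g. map_atom (subst_trm g) ` A \<subseteq> A \<and> inj_on g (atom_vars A) \<and> g ` atom_vars A \<inter> Const ` K = {} \<and>
        (\<forall>x. x \<notin> atom_vars A \<longrightarrow> g x = Var x)}"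
proof -
  have "subst_trm g \<circ> Var = g" for g :: "'v \<Rightarrow> ('v, 'c) trm" by (rule ext) simp
  then show ?thesis
    unfolding Aut_def cq_vars_pattern_query
    unfolding is_qhom_iff_map_atom pattern_query_def fst_conv snd_conv
      set_list_of[OF finite_A] pattern_ineqs_hold_iff[OF finite_atom_vars[OF finite_A] finite_K]
    by auto
qed

end

lemma inj_on_subst_trm:
  assumes "inj_on g V" "g ` V \<subseteq> range Var"
  shows "inj_on (subst_trm g) (Var ` V \<union> Const ` K)"
proof (rule inj_onI)
  fix s t assume s: "s \<in> Var ` V \<union> Const ` K" and t: "t \<in> Var ` V \<union> Const ` K"
    and eq: "subst_trm g s = subst_trm g t"
  have not_const: "g x \<noteq> Const c" if "x \<in> V" for x c
    using assms(2) that by (auto simp: image_subset_iff)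
  show "s = t"
  proof (cases s; cases t)
    fix x y assume st: "s = Var x" "t = Var y"
    then have "x \<in> V" "y \<in> V" "g x = g y" using s t eq by auto
    then show ?thesis using st inj_onD[OF assms(1)] by simp
  next
    fix x c assume "s = Var x" "t = Const c"
    then show ?thesis using s eq not_const by auto
  next
    fix c x assume "s = Const c" "t = Var x"
    then show ?thesis using t eq not_const by (metis Un_iff imageE subst_trm.simps trm.distinct(1))
  next
    fix c d assume "s = Const c" "t = Const d"
    then show ?thesis using eq by simp
  qed
qed

lemma eval_trm_restrict_comp:
  "t \<in> Var ` V \<union> range Const \<Longrightarrow> eval_trm (restrict (eval_trm h \<circ> g) V) t = eval_trm h (subst_trm g t)"
  by auto

lemma atom_terms_instance:
  assumes "A \<subseteq> atoms_over (Var ` atom_vars A \<union> Const ` K)" "fresh_inj K (atom_vars A) h"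
  shows "atom_terms (map_atom (eval_trm h) ` A) - K = h ` atom_vars A"
proof -
  have "eval_trm h ` atom_terms A - K = eval_trm h ` Var ` atom_vars A"
  proof
    show "eval_trm h ` atom_terms A - K \<subseteq> eval_trm h ` Var ` atom_vars A"
    proof
      fix e assume "e \<in> eval_trm h ` atom_terms A - K"
      then obtain t where t: "t \<in> atom_terms A" "e = eval_trm h t" "e \<notin> K" by blast
      then have "t \<in> Var ` atom_vars A \<union> Const ` K" using assms(1) by (auto simp: subset_atoms_over_iff)
      then show "e \<in> eval_trm h ` Var ` atom_vars A" using t(2,3) by auto
    qed
    show "eval_trm h ` Var ` atom_vars A \<subseteq> eval_trm h ` atom_terms A - K"
      using assms(2) by (auto simp: fresh_inj_def atom_vars_def)
  qed
  then show ?thesis by (simp add: atom_terms_map_atom image_image)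
qed

context
  fixes K :: "'c set" and A :: "('r \<times> ('v, 'c) trm list) set"
  assumes finite_A: "finite A" and finite_K: "finite K"
    and A_consts: "A \<subseteq> atoms_over (range Var \<union> Const ` K)"
begin

lemma pattern_atoms_over_vars: "A \<subseteq> atoms_over (Var ` atom_vars A \<union> Const ` K)"
  by (rule atoms_over_vars_consts[OF A_consts])

lemma Aut_pattern_query_image_vars:
  assumes "g \<in> Aut (pattern_query K A)"
  shows "g ` atom_vars A \<subseteq> Var ` atom_vars A"
proof
  fix t assume "t \<in> g ` atom_vars A"
  then obtain x a where x: "t = g x" "x \<in> atom_vars A" and a: "a \<in> A" "Var x \<in> set (snd a)"
    by (auto simp: atom_vars_def atom_terms_def)
  have "map_atom (subst_trm g) a \<in> A"
    using assms a(1) by (auto simp: Aut_pattern_query[OF finite_A finite_K])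
  moreover have "g x \<in> set (snd (map_atom (subst_trm g) a))"
    using a(2) by (force simp: map_atom_def)
  ultimately have "t \<in> Var ` atom_vars A \<union> Const ` K"
    using pattern_atoms_over_vars x(1) by (auto simp: atoms_over_def)
  then show "t \<in> Var ` atom_vars A"
    using assms x by (auto simp: Aut_pattern_query[OF finite_A finite_K])
qed

lemma Aut_pattern_query_permutes_atoms:
  assumes "g \<in> Aut (pattern_query K A)"
  shows "map_atom (subst_trm g) ` A = A"
proof (rule endo_inj_surj[OF finite_A])
  show "map_atom (subst_trm g) ` A \<subseteq> A"
    using assms by (simp add: Aut_pattern_query[OF finite_A finite_K])
  have inj: "inj_on (subst_trm g) (Var ` atom_vars A \<union> Const ` K)"
    using assms Aut_pattern_query_image_vars[OF assms]
    by (intro inj_on_subst_trm) (auto simp: Aut_pattern_query[OF finite_A finite_K])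
  show "inj_on (map_atom (subst_trm g)) A"
    using inj_on_map_atom[OF inj] pattern_atoms_over_vars by (rule inj_on_subset)
qed

lemma map_atom_eval_restrict_comp:
  "map_atom (eval_trm (restrict (eval_trm h \<circ> g) (atom_vars A))) ` A =
    map_atom (eval_trm h) ` map_atom (subst_trm g) ` A"
proof -
  have "Var ` atom_vars A \<union> Const ` K \<subseteq> Var ` atom_vars A \<union> range Const" by blast
  with pattern_atoms_over_vars have "A \<subseteq> atoms_over (Var ` atom_vars A \<union> range Const)"
    by (meson atoms_over_mono subset_trans)
  then have "map_atom (eval_trm (restrict (eval_trm h \<circ> g) (atom_vars A))) ` A =
      map_atom (eval_trm h \<circ> subst_trm g) ` A"
    by (rule image_map_atom_cong) (simp add: eval_trm_restrict_comp)
  then show ?thesis unfolding image_image map_atom_map_atom .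
qed

lemma restrict_comp_Aut_in_fibre:
  assumes h0: "h0 \<in> Hom (pattern_query K A) D" and g: "g \<in> Aut (pattern_query K A)"
  shows "restrict (eval_trm h0 \<circ> g) (atom_vars A) \<in> Hom (pattern_query K A) D"
    and "map_atom (eval_trm (restrict (eval_trm h0 \<circ> g) (atom_vars A))) ` A = map_atom (eval_trm h0) ` A"
proof -
  show image:
    "map_atom (eval_trm (restrict (eval_trm h0 \<circ> g) (atom_vars A))) ` A = map_atom (eval_trm h0) ` A"
    by (simp add: map_atom_eval_restrict_comp Aut_pattern_query_permutes_atoms[OF g])
  have fresh0: "fresh_inj K (atom_vars A) h0"
    using h0 by (simp add: Hom_pattern_query[OF finite_A finite_K])
  have "inj_on (eval_trm h0 \<circ> g) (atom_vars A)"
  proof (rule comp_inj_on)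
    show "inj_on g (atom_vars A)"
      using g by (simp add: Aut_pattern_query[OF finite_A finite_K])
    show "inj_on (eval_trm h0) (g ` atom_vars A)"
      using inj_on_eval_trm[OF fresh0]
      by (rule inj_on_subset) (use Aut_pattern_query_image_vars[OF g] in blast)
  qed
  moreover have "(eval_trm h0 \<circ> g) ` atom_vars A \<subseteq> eval_trm h0 ` Var ` atom_vars A"
    using Aut_pattern_query_image_vars[OF g] by (auto simp: image_comp[symmetric])
  then have "(eval_trm h0 \<circ> g) ` atom_vars A \<inter> K = {}"
    using fresh0 by (auto simp: fresh_inj_def image_image)
  ultimately have "fresh_inj K (atom_vars A) (restrict (eval_trm h0 \<circ> g) (atom_vars A))"
    by (simp add: fresh_inj_def)
  then show "restrict (eval_trm h0 \<circ> g) (atom_vars A) \<in> Hom (pattern_query K A) D"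
    using image h0 by (simp add: Hom_pattern_query[OF finite_A finite_K])
qed

lemma inj_on_restrict_comp_Aut:
  assumes h0: "h0 \<in> Hom (pattern_query K A) D"
  shows "inj_on (\<lambda>g. restrict (eval_trm h0 \<circ> g) (atom_vars A)) (Aut (pattern_query K A))"
proof (rule inj_onI)
  fix g1 g2
  assume g1: "g1 \<in> Aut (pattern_query K A)" and g2: "g2 \<in> Aut (pattern_query K A)"
    and eq: "restrict (eval_trm h0 \<circ> g1) (atom_vars A) = restrict (eval_trm h0 \<circ> g2) (atom_vars A)"
  have "fresh_inj K (atom_vars A) h0"
    using h0 by (simp add: Hom_pattern_query[OF finite_A finite_K])
  note inj = inj_on_eval_trm[OF this]
  show "g1 = g2"
  proof
    fix x show "g1 x = g2 x"
    proof (cases "x \<in> atom_vars A")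
      case True
      then have "eval_trm h0 (g1 x) = eval_trm h0 (g2 x)"
        using fun_cong[OF eq, of x] by simp
      moreover have "g1 x \<in> Var ` atom_vars A" "g2 x \<in> Var ` atom_vars A"
        using Aut_pattern_query_image_vars[OF g1] Aut_pattern_query_image_vars[OF g2] True by auto
      ultimately show ?thesis
        using inj_onD[OF inj] by blast
    next
      case False
      then show ?thesis
        using g1 g2 by (simp add: Aut_pattern_query[OF finite_A finite_K])
    qed
  qed
qed

lemma subst_image_subset_if_eval_image_subset:
  assumes fresh0: "fresh_inj K (atom_vars A) h0" and g_Var: "g ` atom_vars A \<subseteq> Var ` atom_vars A"
    and image: "map_atom (eval_trm h0) ` map_atom (subst_trm g) ` A \<subseteq> map_atom (eval_trm h0) ` A"
  shows "map_atom (subst_trm g) ` A \<subseteq> A"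
proof
  fix b assume "b \<in> map_atom (subst_trm g) ` A"
  then obtain a where a: "a \<in> A" "b = map_atom (subst_trm g) a" by blast
  have subst_closed: "subst_trm g ` (Var ` atom_vars A \<union> Const ` K) \<subseteq> Var ` atom_vars A \<union> Const ` K"
    using g_Var by auto
  have "set (snd a) \<subseteq> Var ` atom_vars A \<union> Const ` K"
    using a(1) pattern_atoms_over_vars by (auto simp: atoms_over_def)
  then have "subst_trm g ` set (snd a) \<subseteq> Var ` atom_vars A \<union> Const ` K"
    using subst_closed by (rule image_mono[THEN subset_trans])
  then have b_over: "b \<in> atoms_over (Var ` atom_vars A \<union> Const ` K)"
    by (simp add: a(2) map_atom_def atoms_over_def)
  have "map_atom (eval_trm h0) b \<in> map_atom (eval_trm h0) ` map_atom (subst_trm g) ` A"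
    using a by blast
  with image have "map_atom (eval_trm h0) b \<in> map_atom (eval_trm h0) ` A"
    by (rule subsetD)
  then obtain a' where a': "map_atom (eval_trm h0) b = map_atom (eval_trm h0) a'" "a' \<in> A"
    by (rule imageE)
  have "b = a'"
    using pattern_atoms_over_vars a'(2)
    by (intro inj_onD[OF inj_on_map_atom[OF inj_on_eval_trm[OF fresh0]] a'(1) b_over]) blast
  then show "b \<in> A" using a'(2) by simp
qed

lemma fibre_subset_restrict_comp_Aut:
  assumes h0: "h0 \<in> Hom (pattern_query K A) D" and h: "h \<in> Hom (pattern_query K A) D"
    and same: "map_atom (eval_trm h) ` A = map_atom (eval_trm h0) ` A"
  shows "h \<in> (\<lambda>g. restrict (eval_trm h0 \<circ> g) (atom_vars A)) ` Aut (pattern_query K A)"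
proof -
  let ?V = "atom_vars A"
  have fresh0: "fresh_inj K ?V h0" and fresh: "fresh_inj K ?V h" and ext: "h \<in> extensional ?V"
    using h0 h by (simp_all add: Hom_pattern_query[OF finite_A finite_K])
  have same_range: "h ` ?V = h0 ` ?V"
    using atom_terms_instance[OF pattern_atoms_over_vars fresh]
      atom_terms_instance[OF pattern_atoms_over_vars fresh0] same
    by simp
  \<comment> \<open>The automorphism renames each variable x to the variable that h0 sends to h x.\<close>
  define \<pi> where "\<pi> = inv_into ?V h0 \<circ> h"
  define g :: "'v \<Rightarrow> ('v, 'c) trm" where "g x = (if x \<in> ?V then Var (\<pi> x) else Var x)" for x
  have \<pi>_in: "\<pi> x \<in> ?V" and h0_\<pi>: "h0 (\<pi> x) = h x" if "x \<in> ?V" for x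
  proof -
    have "h x \<in> h0 ` ?V" using that same_range by blast
    then show "\<pi> x \<in> ?V" "h0 (\<pi> x) = h x"
      by (simp_all add: \<pi>_def inv_into_into f_inv_into_f)
  qed
  have restrict_g: "restrict (eval_trm h0 \<circ> g) ?V = h"
  proof
    fix x show "restrict (eval_trm h0 \<circ> g) ?V x = h x"
      using ext h0_\<pi> by (cases "x \<in> ?V") (auto simp: g_def extensional_def)
  qed
  have "inj_on \<pi> ?V"
    unfolding \<pi>_def using fresh same_range
    by (intro comp_inj_on inj_on_inv_into) (auto simp: fresh_inj_def)
  then have inj_g: "inj_on g ?V"
    by (auto simp: inj_on_def g_def)
  have g_Var: "g ` ?V \<subseteq> Var ` ?V"
    using \<pi>_in by (auto simp: g_def)
  have "map_atom (eval_trm h0) ` map_atom (subst_trm g) ` A = map_atom (eval_trm h0) ` A"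
    using map_atom_eval_restrict_comp[of h0 g] restrict_g same by simp
  then have "map_atom (subst_trm g) ` A \<subseteq> A"
    using subst_image_subset_if_eval_image_subset[OF fresh0 g_Var] by simp
  then have "g \<in> Aut (pattern_query K A)"
    using inj_g by (auto simp: Aut_pattern_query[OF finite_A finite_K] g_def)
  then show ?thesis
    by (rule image_eqI[rotated]) (simp add: restrict_g)
qed

lemma bij_betw_Aut_fibre:
  assumes "h0 \<in> Hom (pattern_query K A) D"
  shows "bij_betw (\<lambda>g. restrict (eval_trm h0 \<circ> g) (atom_vars A)) (Aut (pattern_query K A))
    {h \<in> Hom (pattern_query K A) D. map_atom (eval_trm h) ` A = map_atom (eval_trm h0) ` A}"
proof -
  let ?act = "\<lambda>g. restrict (eval_trm h0 \<circ> g) (atom_vars A)"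
    and ?fibre = "{h \<in> Hom (pattern_query K A) D. map_atom (eval_trm h) ` A = map_atom (eval_trm h0) ` A}"
  have "?act ` Aut (pattern_query K A) \<subseteq> ?fibre"
  proof (rule image_subsetI)
    fix g assume "g \<in> Aut (pattern_query K A)"
    then show "?act g \<in> ?fibre"
      using restrict_comp_Aut_in_fibre[OF assms] by (simp only: mem_Collect_eq)
  qed
  moreover have "?fibre \<subseteq> ?act ` Aut (pattern_query K A)"
    using fibre_subset_restrict_comp_Aut[OF assms] by (auto intro!: subsetI)
  ultimately have "?act ` Aut (pattern_query K A) = ?fibre"
    by (rule subset_antisym)
  with inj_on_restrict_comp_Aut[OF assms] show ?thesis
    unfolding bij_betw_def by (rule conjI)
qed

lemma finite_Hom_pattern_query:
  assumes "finite D"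
  shows "finite (Hom (pattern_query K A) D)"
proof (rule finite_subset)
  show "Hom (pattern_query K A) D \<subseteq> PiE (atom_vars A) (\<lambda>_. atom_terms D)"
  proof
    fix h assume h: "h \<in> Hom (pattern_query K A) D"
    then have "atom_terms (map_atom (eval_trm h) ` A) \<subseteq> atom_terms D"
      by (auto simp: Hom_pattern_query[OF finite_A finite_K] atom_terms_def)
    then have "h ` atom_vars A \<subseteq> atom_terms D"
      by (force simp: atom_terms_map_atom atom_vars_def)
    then show "h \<in> PiE (atom_vars A) (\<lambda>_. atom_terms D)"
      using h by (auto simp: Hom_pattern_query[OF finite_A finite_K] PiE_iff)
  qed
  show "finite (PiE (atom_vars A) (\<lambda>_. atom_terms D))"
    using assms finite_atom_vars[OF finite_A] by (intro finite_PiE) (auto simp: atom_terms_def)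
qed

lemma image_Hom_pattern_query:
  "(\<lambda>h. map_atom (eval_trm h) ` A) ` Hom (pattern_query K A) D = {S \<in> instances K A. S \<subseteq> D}"
proof
  show "(\<lambda>h. map_atom (eval_trm h) ` A) ` Hom (pattern_query K A) D \<subseteq> {S \<in> instances K A. S \<subseteq> D}"
    by (auto simp: Hom_pattern_query[OF finite_A finite_K] instances_def)
next
  show "{S \<in> instances K A. S \<subseteq> D} \<subseteq> (\<lambda>h. map_atom (eval_trm h) ` A) ` Hom (pattern_query K A) D"
  proof
    fix S assume "S \<in> {S \<in> instances K A. S \<subseteq> D}"
    then obtain h where h: "fresh_inj K (atom_vars A) h" "S = map_atom (eval_trm h) ` A" "S \<subseteq> D"
      by (auto simp: instances_def)
    have "map_atom (eval_trm (restrict h (atom_vars A))) ` A = S"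
      unfolding h(2) by (rule image_map_atom_cong[OF pattern_atoms_over_vars]) auto
    moreover have "fresh_inj K (atom_vars A) (restrict h (atom_vars A))"
      using h(1) by (simp add: fresh_inj_def)
    ultimately show "S \<in> (\<lambda>h. map_atom (eval_trm h) ` A) ` Hom (pattern_query K A) D"
      using h(3) by (intro image_eqI[where x = "restrict h (atom_vars A)"])
        (simp_all add: Hom_pattern_query[OF finite_A finite_K])
  qed
qed

lemma card_Hom_pattern_query:
  assumes "finite D"
  shows "card (Hom (pattern_query K A) D) = card (Aut (pattern_query K A)) * card {S \<in> instances K A. S \<subseteq> D}"
proof -
  let ?H = "Hom (pattern_query K A) D" and ?inst = "\<lambda>h. map_atom (eval_trm h) ` A"
  have "card ?H = (\<Sum>S\<in>?inst ` ?H. card {h \<in> ?H. ?inst h = S})"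
    using sum.image_gen[OF finite_Hom_pattern_query[OF assms], of "\<lambda>_. 1" ?inst] by (simp only: card_eq_sum)
  also have "\<dots> = (\<Sum>S\<in>?inst ` ?H. card (Aut (pattern_query K A)))"
  proof (rule sum.cong[OF refl])
    fix S assume "S \<in> ?inst ` ?H"
    then obtain h0 where "h0 \<in> ?H" "S = ?inst h0" by blast
    then show "card {h \<in> ?H. ?inst h = S} = card (Aut (pattern_query K A))"
      using bij_betw_same_card[OF bij_betw_Aut_fibre] by simp
  qed
  finally show ?thesis by (simp add: image_Hom_pattern_query)
qed

lemma count_hom_div_card_Aut:
  assumes "finite D"
  shows "(of_nat (count_hom (pattern_query K A) D) :: rat) * (1 / of_nat (card (Aut (pattern_query K A)))) =
    of_nat (card {S \<in> instances K A. S \<subseteq> D})"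
proof (cases "{S \<in> instances K A. S \<subseteq> D} = {}")
  case True
  then have "card {S \<in> instances K A. S \<subseteq> D} = 0" by (simp only: card.empty)
  then show ?thesis by (simp add: count_hom_def card_Hom_pattern_query[OF assms])
next
  case False
  then obtain h0 where h0: "h0 \<in> Hom (pattern_query K A) D"
    by (auto simp flip: image_Hom_pattern_query)
  have "finite {h \<in> Hom (pattern_query K A) D. map_atom (eval_trm h) ` A = map_atom (eval_trm h0) ` A}"
    using finite_Hom_pattern_query[OF assms] by simp
  then have "card (Aut (pattern_query K A)) \<noteq> 0"
    using bij_betw_same_card[OF bij_betw_Aut_fibre[OF h0]] h0 by auto
  then show ?thesis by (simp add: count_hom_def card_Hom_pattern_query[OF assms])
qed

end

section \<open>Counting minimal supports\<close>

definition pattern_rep ::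
  "('r, 'v, 'c) ucqneq \<Rightarrow> nat \<Rightarrow> ('r \<times> ('v, 'c) trm list) set \<Rightarrow> ('r \<times> ('v, 'c) trm list) set" where
  "pattern_rep u k A = (SOME B. B \<in> patterns u k \<and> instances (ucq_consts u) B = instances (ucq_consts u) A)"

definition pattern_reps :: "('r, 'v, 'c) ucqneq \<Rightarrow> nat \<Rightarrow> ('r \<times> ('v, 'c) trm list) set set" where
  "pattern_reps u k = pattern_rep u k ` patterns u k"

lemma
  assumes "A \<in> patterns u k"
  shows pattern_rep_in_patterns: "pattern_rep u k A \<in> patterns u k"
    and instances_pattern_rep: "instances (ucq_consts u) (pattern_rep u k A) = instances (ucq_consts u) A"
  using someI[of "\<lambda>B. B \<in> patterns u k \<and> instances (ucq_consts u) B = instances (ucq_consts u) A" A] assms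
  by (simp_all add: pattern_rep_def)

lemma pattern_reps_subset: "pattern_reps u k \<subseteq> patterns u k"
  using pattern_rep_in_patterns by (auto simp: pattern_reps_def)

lemma finite_pattern_reps: "finite (pattern_reps u k)"
  unfolding pattern_reps_def by (rule finite_imageI[OF finite_patterns])

lemma instances_pattern_reps_disjoint:
  assumes A: "A \<in> pattern_reps u k" and B: "B \<in> pattern_reps u k" and "A \<noteq> B"
  shows "instances (ucq_consts u) A \<inter> instances (ucq_consts u) B = {}"
proof (rule ccontr)
  assume "instances (ucq_consts u) A \<inter> instances (ucq_consts u) B \<noteq> {}"
  then obtain S where "S \<in> instances (ucq_consts u) A" "S \<in> instances (ucq_consts u) B" by blast
  moreover have "A \<in> patterns u k" "B \<in> patterns u k"
    using A B pattern_reps_subset by blast+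
  ultimately have same: "instances (ucq_consts u) A = instances (ucq_consts u) B"
    by (intro instances_eq_if_common_instance finite_pattern pattern_subset_atoms_over)
  obtain A' B' where A': "A' \<in> patterns u k" "A = pattern_rep u k A'"
    and B': "B' \<in> patterns u k" "B = pattern_rep u k B'"
    using A B by (auto simp: pattern_reps_def)
  have "instances (ucq_consts u) A' = instances (ucq_consts u) B'"
    using same instances_pattern_rep[OF A'(1)] instances_pattern_rep[OF B'(1)] by (simp add: A'(2) B'(2))
  then have "A = B"
    by (simp add: A'(2) B'(2) pattern_rep_def)
  with \<open>A \<noteq> B\<close> show False ..
qed

lemma minimal_supports_eq_UN_pattern_reps:
  "{S. min_support u D S \<and> card S = k} =
    (\<Union>A\<in>pattern_reps u k. {S \<in> instances (ucq_consts u) A. S \<subseteq> D})"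
proof
  show "{S. min_support u D S \<and> card S = k} \<subseteq> (\<Union>A\<in>pattern_reps u k. {S \<in> instances (ucq_consts u) A. S \<subseteq> D})"
  proof
    fix S assume "S \<in> {S. min_support u D S \<and> card S = k}"
    then have S: "S \<subseteq> D" "minimal_model u S" "card S = k"
      by (auto simp: min_support_def minimal_model_def)
    obtain A where A: "A \<in> patterns u k" "S \<in> instances (ucq_consts u) A"
      using minimal_model_in_pattern_instances[OF S(2,3)] .
    then have "pattern_rep u k A \<in> pattern_reps u k" "S \<in> instances (ucq_consts u) (pattern_rep u k A)"
      using instances_pattern_rep[OF A(1)] by (auto simp: pattern_reps_def)
    then show "S \<in> (\<Union>A\<in>pattern_reps u k. {S \<in> instances (ucq_consts u) A. S \<subseteq> D})"
      using S(1) by blast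
  qed
  show "(\<Union>A\<in>pattern_reps u k. {S \<in> instances (ucq_consts u) A. S \<subseteq> D}) \<subseteq> {S. min_support u D S \<and> card S = k}"
  proof
    fix S assume "S \<in> (\<Union>A\<in>pattern_reps u k. {S \<in> instances (ucq_consts u) A. S \<subseteq> D})"
    then obtain A where A: "A \<in> patterns u k" and S: "S \<in> instances (ucq_consts u) A" "S \<subseteq> D"
      using pattern_reps_subset by blast
    obtain S0 where S0: "S0 \<in> instances (ucq_consts u) A" "minimal_model u S0" "card S0 = k"
      using A by (auto simp: patterns_def)
    then have "minimal_model u S \<and> card S = k"
      using instances_minimal_model[OF finite_pattern[OF A] pattern_subset_atoms_over[OF A] S0(1) S(1) S0(2)]
      by simp
    then show "S \<in> {S. min_support u D S \<and> card S = k}"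
      using S(2) by (auto simp: min_support_def minimal_model_def)
  qed
qed

lemma
  assumes "A \<in> patterns u k"
  shows safe_pattern_query_of_pattern: "safe_cq (pattern_query (ucq_consts u) A)"
    and cq_size_pattern_query_of_pattern: "cq_size (pattern_query (ucq_consts u) A) \<le> 8 * (ucq_size u)\<^sup>2"
proof -
  show "safe_cq (pattern_query (ucq_consts u) A)"
    by (rule safe_pattern_query[OF finite_pattern[OF assms] finite_ucq_consts])
  have "A \<subseteq> candidate_atoms u" "card A \<le> ucq_size u"
    using assms by (simp_all add: patterns_def)
  then show "cq_size (pattern_query (ucq_consts u) A) \<le> 8 * (ucq_size u)\<^sup>2"
    by (rule cq_size_pattern_query)
qed

lemma inj_on_pattern_query:
  assumes "\<And>A. A \<in> \<A> \<Longrightarrow> finite A"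
  shows "inj_on (pattern_query K) \<A>"
proof (rule inj_onI)
  fix A B assume "A \<in> \<A>" "B \<in> \<A>" "pattern_query K A = pattern_query K B"
  then show "A = B"
    using set_list_of assms by (metis fst_conv pattern_query_def)
qed

theorem count_FMS_eq_sum_pattern_queries:
  assumes "finite D"
  shows "(of_nat (count_FMS u k D) :: rat) =
    (\<Sum>q \<in> pattern_query (ucq_consts u) ` pattern_reps u k. of_nat (count_hom q D) * (1 / of_nat (card (Aut q))))"
proof -
  let ?K = "ucq_consts u"
  have finite_reps: "\<And>A. A \<in> pattern_reps u k \<Longrightarrow> finite A"
    using pattern_reps_subset finite_pattern by blast
  have "count_FMS u k D = card (\<Union>A\<in>pattern_reps u k. {S \<in> instances ?K A. S \<subseteq> D})"
    by (simp add: count_FMS_def minimal_supports_eq_UN_pattern_reps)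
  also have "\<dots> = (\<Sum>A\<in>pattern_reps u k. card {S \<in> instances ?K A. S \<subseteq> D})"
  proof (rule card_UN_disjoint[OF finite_pattern_reps])
    show "\<forall>A\<in>pattern_reps u k. finite {S \<in> instances ?K A. S \<subseteq> D}"
      using assms by (auto intro: finite_subset[of _ "Pow D"])
    show "\<forall>A\<in>pattern_reps u k. \<forall>B\<in>pattern_reps u k. A \<noteq> B \<longrightarrow>
        {S \<in> instances ?K A. S \<subseteq> D} \<inter> {S \<in> instances ?K B. S \<subseteq> D} = {}"
      using instances_pattern_reps_disjoint by blast
  qed
  finally have "(of_nat (count_FMS u k D) :: rat) =
      (\<Sum>A\<in>pattern_reps u k. of_nat (card {S \<in> instances ?K A. S \<subseteq> D}))"
    by simp
  also have "\<dots> = (\<Sum>A\<in>pattern_reps u k.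
      of_nat (count_hom (pattern_query ?K A) D) * (1 / of_nat (card (Aut (pattern_query ?K A)))))"
  proof (rule sum.cong[OF refl])
    fix A assume "A \<in> pattern_reps u k"
    then have A: "A \<in> patterns u k" using pattern_reps_subset by blast
    show "of_nat (card {S \<in> instances ?K A. S \<subseteq> D}) =
        (of_nat (count_hom (pattern_query ?K A) D) :: rat) * (1 / of_nat (card (Aut (pattern_query ?K A))))"
      using count_hom_div_card_Aut[OF finite_pattern[OF A] finite_ucq_consts pattern_subset_atoms_over[OF A] assms]
      by simp
  qed
  also have "\<dots> = (\<Sum>q \<in> pattern_query ?K ` pattern_reps u k. of_nat (count_hom q D) * (1 / of_nat (card (Aut q))))"
    by (simp add: sum.reindex[OF inj_on_pattern_query[OF finite_reps]])
  finally show ?thesis .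
qed

theorem theorem2:
  "\<exists>c::nat. \<forall>(u :: ('r, 'v, 'c) ucqneq) (k::nat).
     \<exists>Q :: ('r, 'v, 'c) cqneq set.
       finite Q \<and>
       (\<forall>q \<in> Q. safe_cq q \<and> cq_size q \<le> c * (ucq_size u)^2) \<and>
       (\<forall>D :: ('r, 'c) database. finite D \<longrightarrow>
          (of_nat (count_FMS u k D) :: rat) =
            (\<Sum>q \<in> Q. of_nat (count_hom q D) * (1 / of_nat (card (Aut q)))))"
proof (intro exI[of _ 8] allI)
  fix u :: "('r, 'v, 'c) ucqneq" and k :: nat
  let ?Q = "pattern_query (ucq_consts u) ` pattern_reps u k"
  show "\<exists>Q :: ('r, 'v, 'c) cqneq set. finite Q \<and>
      (\<forall>q \<in> Q. safe_cq q \<and> cq_size q \<le> 8 * (ucq_size u)^2) \<and>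
      (\<forall>D :: ('r, 'c) database. finite D \<longrightarrow>
         (of_nat (count_FMS u k D) :: rat) = (\<Sum>q \<in> Q. of_nat (count_hom q D) * (1 / of_nat (card (Aut q)))))"
  proof (intro exI[of _ ?Q] conjI ballI allI impI)
    show "finite ?Q"
      by (rule finite_imageI[OF finite_pattern_reps])
  next
    fix q assume "q \<in> ?Q"
    then obtain A where "A \<in> patterns u k" "q = pattern_query (ucq_consts u) A"
      using pattern_reps_subset by blast
    then show "safe_cq q" "cq_size q \<le> 8 * (ucq_size u)^2"
      by (simp_all add: safe_pattern_query_of_pattern cq_size_pattern_query_of_pattern)
  next
    fix D :: "('r, 'c) database" assume "finite D"
    then show "(of_nat (count_FMS u k D) :: rat) = (\<Sum>q \<in> ?Q. of_nat (count_hom q D) * (1 / of_nat (card (Aut q))))"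
      by (rule count_FMS_eq_sum_pattern_queries)
  qed
qed

end
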